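(* For all integers $n\geq 0$ and all real $x\in(0,\pi)$, $$\sum_{k=0}^{n}(n-k+1)\sin\bigl((2k+1/2)x\bigr)>0 .$$ *)

theory Defs
  imports Complex_Main
begin

end

theory Submission
  imports Defs
begin

(* With h = x / 2 and N = n + 1 the sum is S = sum_{k<N} (N - k) sin ((4k + 1) h), a Fejer-type
   sum of an arithmetic progression of sines. Summing twice against 2 sin (2h) telescopes:
     4 sin^2 (2h) S = sin h (1 + 4N cos^2 h) - sin ((4N + 1) h),
   so it suffices that the right-hand side is positive for 0 < h < pi/2. If 4N sin h >= 1 the
   first term already exceeds 1. Otherwise 2Nh < pi/2, so sin (kh) >= sin h for k <= 2N, and
     (4N + 1) sin h - sin ((4N + 1) h) = 4 sin h sum_{k=1..2N} sin^2 (kh) >= 8N sin^3 h,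
   which beats the deficit (4N + 1) sin h - sin h (1 + 4N cos^2 h) = 4N sin^3 h. *)

lemma sin_progression_sum:
  fixes a d :: real
  shows "2 * sin d * (\<Sum>k<m. sin (a + 2 * real k * d)) = cos (a - d) - cos (a + (2 * real m - 1) * d)"
proof (induction m)
  case 0
  then show ?case by simp
next
  case (Suc m)
  have "2 * sin d * sin (a + 2 * real m * d)
      = cos (a + (2 * real m - 1) * d) - cos (a + (2 * real (Suc m) - 1) * d)"
    using cos_diff[of "a + 2 * real m * d" d] cos_add[of "a + 2 * real m * d" d]
    by (simp add: algebra_simps)
  with Suc.IH show ?case by (simp add: algebra_simps)
qed

lemma weighted_sin_progression_sum:
  fixes a d :: real
  shows "4 * (sin d)\<^sup>2 * (\<Sum>k<N. (real N - real k) * sin (a + 2 * real k * d))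
    = 2 * real N * sin d * cos (a - d) + sin a - sin (a + 2 * real N * d)"
proof (induction N)
  case 0
  then show ?case by simp
next
  case (Suc N)
  have weights_split: "(\<Sum>k<Suc N. (real (Suc N) - real k) * sin (a + 2 * real k * d))
     = (\<Sum>k<N. (real N - real k) * sin (a + 2 * real k * d)) + (\<Sum>k<Suc N. sin (a + 2 * real k * d))"
  proof -
    have "(\<Sum>k<Suc N. (real (Suc N) - real k) * sin (a + 2 * real k * d))
        = (\<Sum>k<Suc N. (real N - real k) * sin (a + 2 * real k * d) + sin (a + 2 * real k * d))"
      by (intro sum.cong) (auto simp: algebra_simps)
    then show ?thesis by (simp add: sum.distrib)
  qed
  have product_to_sum: "2 * sin d * cos (a + (2 * real N + 1) * d)
      = sin (a + 2 * real (Suc N) * d) - sin (a + 2 * real N * d)"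
    using sin_add[of "a + (2 * real N + 1) * d" d] sin_diff[of "a + (2 * real N + 1) * d" d]
    by (simp add: algebra_simps)
  have progression: "2 * sin d * (\<Sum>k<Suc N. sin (a + 2 * real k * d))
      = cos (a - d) - cos (a + (2 * real N + 1) * d)"
    using sin_progression_sum[of d a "Suc N"] by (simp add: algebra_simps)
  have "4 * (sin d)\<^sup>2 * (\<Sum>k<Suc N. (real (Suc N) - real k) * sin (a + 2 * real k * d))
      = 4 * (sin d)\<^sup>2 * (\<Sum>k<N. (real N - real k) * sin (a + 2 * real k * d))
        + 2 * sin d * (2 * sin d * (\<Sum>k<Suc N. sin (a + 2 * real k * d)))"
    unfolding weights_split by (simp add: power2_eq_square algebra_simps)
  also have "\<dots> = 2 * real N * sin d * cos (a - d) + sin a - sin (a + 2 * real N * d)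
        + 2 * sin d * (cos (a - d) - cos (a + (2 * real N + 1) * d))"
    by (simp only: Suc.IH progression)
  also have "\<dots> = 2 * real (Suc N) * sin d * cos (a - d) + sin a - sin (a + 2 * real (Suc N) * d)"
    using product_to_sum by (simp add: algebra_simps)
  finally show ?case .
qed

lemma sin_odd_multiple_sum_squares:
  fixes h :: real
  shows "(2 * real K + 1) * sin h - sin ((2 * real K + 1) * h)
    = 4 * sin h * (\<Sum>k = 1..K. (sin (real k * h))\<^sup>2)"
proof (induction K)
  case 0
  then show ?case by simp
next
  case (Suc K)
  define b where "b = real (Suc K) * h"
  have "sin (2 * b + h) - sin (2 * b - h) = 2 * cos (2 * b) * sin h"
    by (simp add: sin_add sin_diff)
  also have "\<dots> = 2 * sin h - 4 * sin h * (sin b)\<^sup>2"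
    by (simp only: cos_double_sin) (simp add: algebra_simps)
  moreover have "(2 * real K + 1) * h = 2 * b - h" "(2 * real (Suc K) + 1) * h = 2 * b + h"
    unfolding b_def by (simp_all add: algebra_simps)
  ultimately show ?case
    using Suc.IH by (simp add: b_def algebra_simps)
qed

lemma abs_sin_real_mult_le:
  fixes y :: real
  shows "\<bar>sin (real m * y)\<bar> \<le> real m * \<bar>sin y\<bar>"
proof (induction m)
  case 0
  then show ?case by simp
next
  case (Suc m)
  have "\<bar>sin (real (Suc m) * y)\<bar> = \<bar>sin (real m * y) * cos y + cos (real m * y) * sin y\<bar>"
    by (simp add: algebra_simps sin_add)
  also have "\<dots> \<le> \<bar>sin (real m * y)\<bar> * \<bar>cos y\<bar> + \<bar>cos (real m * y)\<bar> * \<bar>sin y\<bar>"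
    by (metis abs_mult abs_triangle_ineq)
  also have "\<dots> \<le> \<bar>sin (real m * y)\<bar> + \<bar>sin y\<bar>"
    by (intro add_mono mult_left_le mult_left_le_one_le) auto
  finally show ?case
    using Suc.IH by (simp add: algebra_simps)
qed

lemma one_le_mult_sin:
  fixes h :: real
  assumes "0 < h" "h \<le> pi / 2" "pi / 2 \<le> real m * h"
  shows "1 \<le> real m * sin h"
proof -
  have "m > 0"
    using assms pi_gt_zero by (cases m) auto
  define y where "y = pi / (2 * real m)"
  have "0 < y" "y \<le> h"
    using \<open>m > 0\<close> assms(3) by (auto simp: y_def field_simps)
  have "1 = \<bar>sin (real m * y)\<bar>"
    using \<open>m > 0\<close> by (simp add: y_def)
  also have "\<dots> \<le> real m * sin y"
    using abs_sin_real_mult_le[of m y] \<open>0 < y\<close> \<open>y \<le> h\<close> assms(2) by (simp add: sin_ge_zero)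
  also have "\<dots> \<le> real m * sin h"
    using \<open>0 < y\<close> \<open>y \<le> h\<close> assms(2) by (intro mult_left_mono) (auto simp: sin_mono_le_eq)
  finally show ?thesis .
qed

lemma sum_sin_squares_ge:
  fixes h :: real
  assumes "0 \<le> h" "real K * h \<le> pi / 2"
  shows "real K * (sin h)\<^sup>2 \<le> (\<Sum>k = 1..K. (sin (real k * h))\<^sup>2)"
proof -
  have "(sin h)\<^sup>2 \<le> (sin (real k * h))\<^sup>2" if "k \<in> {1..K}" for k
  proof -
    have "h \<le> real k * h" "real k * h \<le> real K * h"
      using that assms(1) by (auto intro: mult_right_mono simp: mult_le_cancel_right1)
    with assms have "0 \<le> sin h" "sin h \<le> sin (real k * h)"
      by (auto intro: sin_ge_zero simp: sin_mono_le_eq)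
    then show ?thesis
      by (auto intro: power_mono)
  qed
  then have "(\<Sum>k = 1..K. (sin h)\<^sup>2) \<le> (\<Sum>k = 1..K. (sin (real k * h))\<^sup>2)"
    by (rule sum_mono)
  then show ?thesis by simp
qed

lemma sin_odd_multiple_lt:
  fixes h :: real
  assumes "0 < h" "h < pi / 2" "N \<ge> 1"
  shows "sin ((4 * real N + 1) * h) < sin h * (1 + 4 * real N * (cos h)\<^sup>2)"
proof -
  define s where "s = sin h"
  have "0 < s"
    using assms by (simp add: s_def sin_gt_zero)
  have "s < 1"
    using assms sin_mono_less_eq[of h "pi / 2"] by (simp add: s_def)
  have cos_sq: "(cos h)\<^sup>2 = 1 - s\<^sup>2"
    by (simp add: s_def cos_squared_eq)
  show ?thesis
  proof (cases "1 \<le> 4 * real N * s")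
    case True
    have "0 < 4 * real N * s\<^sup>2"
      using \<open>0 < s\<close> assms(3) by simp
    with True \<open>s < 1\<close> have "0 < (1 - s) * (4 * real N * s\<^sup>2 + 4 * real N * s - 1)"
      by (intro mult_pos_pos) auto
    also have "\<dots> = s * (1 + 4 * real N * (cos h)\<^sup>2) - 1"
      unfolding cos_sq by (simp add: algebra_simps power2_eq_square)
    finally have "1 < sin h * (1 + 4 * real N * (cos h)\<^sup>2)"
      by (simp add: s_def)
    with sin_le_one[of "(4 * real N + 1) * h"] show ?thesis
      by linarith
  next
    case False
    have "real (2 * N) * h < pi / 2"
      using one_le_mult_sin[of h "2 * N"] False assms \<open>0 < s\<close> by (force simp: s_def)
    then have "real (2 * N) * s\<^sup>2 \<le> (\<Sum>k = 1..2 * N. (sin (real k * h))\<^sup>2)"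
      using sum_sin_squares_ge[of h "2 * N"] assms by (simp add: s_def)
    then have "8 * real N * s ^ 3 \<le> (4 * real N + 1) * s - sin ((4 * real N + 1) * h)"
      using sin_odd_multiple_sum_squares[of "2 * N" h] \<open>0 < s\<close>
      by (simp add: s_def power3_eq_cube power2_eq_square mult_left_mono algebra_simps)
    moreover have "s * (1 + 4 * real N * (cos h)\<^sup>2) = (4 * real N + 1) * s - 4 * real N * s ^ 3"
      unfolding cos_sq by (simp add: algebra_simps power2_eq_square power3_eq_cube)
    moreover have "0 < real N * s ^ 3"
      using \<open>0 < s\<close> assms(3) by simp
    ultimately show ?thesis
      by (simp add: s_def)
  qed
qed

theorem mainTheorem4:
  fixes n :: nat and x :: real
  assumes "0 < x" and "x < pi"
  shows "(\<Sum>k = 0..n. (real n - real k + 1) * sin ((2 * real k + 1/2) * x)) > 0"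
proof -
  define h where "h = x / 2"
  define N where "N = Suc n"
  have sum_eq: "(\<Sum>k = 0..n. (real n - real k + 1) * sin ((2 * real k + 1/2) * x))
      = (\<Sum>k<N. (real N - real k) * sin (h + 2 * real k * (2 * h)))"
    unfolding N_def atLeast0AtMost lessThan_Suc_atMost[symmetric] h_def
    by (intro sum.cong) (auto simp: algebra_simps)
  have "4 * (sin (2 * h))\<^sup>2 * (\<Sum>k<N. (real N - real k) * sin (h + 2 * real k * (2 * h)))
      = 2 * real N * sin (2 * h) * cos (h - 2 * h) + sin h - sin (h + 2 * real N * (2 * h))"
    by (rule weighted_sin_progression_sum)
  also have "\<dots> = sin h * (1 + 4 * real N * (cos h)\<^sup>2) - sin ((4 * real N + 1) * h)"
    unfolding sin_double by (simp add: power2_eq_square algebra_simps)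
  also have "\<dots> > 0"
    using sin_odd_multiple_lt[of h N] assms by (simp add: h_def N_def)
  finally have "0 < 4 * (sin (2 * h))\<^sup>2 * (\<Sum>k<N. (real N - real k) * sin (h + 2 * real k * (2 * h)))" .
  then show ?thesis
    unfolding sum_eq by (simp add: zero_less_mult_iff)
qed

end
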